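(* Let $\{\rho_\theta\}_{\theta\in\Theta}$ be a differentiable family of density operators on a $d$-dimensional Hilbert space. For $\varepsilon\in(0,1)$ set $\rho_\theta^\varepsilon:=(1-\varepsilon)\rho_\theta+\varepsilon\, I/d$. Then $$I_F(\theta;\{\rho_\theta\}_\theta)=\lim_{\varepsilon\to 0}I_F(\theta;\{\rho^\varepsilon_\theta\}_\theta),$$ including the case where the left-hand side equals $+\infty$.
   Context: All Hilbert spaces are finite-dimensional; $\Theta\subseteq\mathbb{R}$ is the parameter set and $\partial_\theta$ denotes the derivative with respect to $\theta$. For a differentiable family $\{\rho_\theta\}_\theta$ of density operators with spectral decomposition $\rho_\theta=\sum_j\lambda^j_\theta|\psi^j_\theta\rangle\langle\psi^j_\theta|$ (including zero eigenvalues), let $\Pi^\perp_{\rho_\theta}$ be the projection onto the kernel of $\rho_\theta$. The SLD Fisher information is $I_F(\theta;\{\rho_\theta\}_\theta)=2\sum_{j,k:\lambda^j_\theta+\lambda^k_\theta>0}\frac{|\langle\psi^j_\theta|(\partial_\theta\rho_\theta)|\psi^k_\theta\rangle|^2}{\lambda^j_\theta+\lambda^k_\theta}$ if $\Pi^\perp_{\rho_\theta}(\partial_\theta\rho_\theta)\Pi^\perp_{\rho_\theta}=0$, and $+\infty$ otherwise. *)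

theory Defs
  imports "HOL-Analysis.Analysis"
begin

text \<open>Hilbert space: complex^'n with 'n a finite index type, d = CARD('n).
  Operators: complex^'n^'n (row i, column k entry A$i$k).\<close>

definition cinner :: "complex^'n \<Rightarrow> complex^'n \<Rightarrow> complex" where
  "cinner v w = (\<Sum>i\<in>UNIV. cnj (v$i) * w$i)"

definition outer :: "complex^'n \<Rightarrow> complex^'n \<Rightarrow> complex^'n^'n" where
  "outer v w = (\<chi> i k. v$i * cnj (w$k))"

definition hermitian_op :: "complex^'n^'n \<Rightarrow> bool" where
  "hermitian_op A \<longleftrightarrow> (\<forall>i k. A$i$k = cnj (A$k$i))"

definition mtrace :: "complex^'n^'n \<Rightarrow> complex" where
  "mtrace A = (\<Sum>i\<in>UNIV. A$i$i)"

definition density_op :: "complex^'n^'n \<Rightarrow> bool" where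
  "density_op A \<longleftrightarrow> hermitian_op A \<and> (\<forall>v. 0 \<le> Re (cinner v (A *v v))) \<and> mtrace A = 1"

definition is_spectral_decomp :: "complex^'n^'n \<Rightarrow> ('n \<Rightarrow> real) \<Rightarrow> ('n \<Rightarrow> complex^'n) \<Rightarrow> bool" where
  "is_spectral_decomp A lam psi \<longleftrightarrow>
     (\<forall>j k. cinner (psi j) (psi k) = (if j = k then 1 else 0)) \<and>
     A = (\<Sum>j\<in>UNIV. (\<chi> a b. complex_of_real (lam j) * outer (psi j) (psi j) $ a $ b))"

definition kernel_proj :: "complex^'n^'n \<Rightarrow> complex^'n^'n" where
  "kernel_proj A = (THE P. hermitian_op P \<and> P ** P = P \<and>
                          range (\<lambda>y. P *v y) = {v. A *v v = 0})"

definition sld_fisher :: "complex^'n^'n \<Rightarrow> complex^'n^'n \<Rightarrow> ereal" where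
  "sld_fisher A D =
     (if kernel_proj A ** D ** kernel_proj A = 0 then
        (let (lam, psi) = (SOME (lam, psi). is_spectral_decomp A lam psi) in
           ereal (2 * (\<Sum>(j,k)\<in>{(j,k). lam j + lam k > 0}.
                        (cmod (cinner (psi j) (D *v psi k)))^2 / (lam j + lam k))))
      else \<infinity>)"

definition fisher_info :: "(real \<Rightarrow> complex^'n^'n) \<Rightarrow> real \<Rightarrow> ereal" where
  "fisher_info rho \<theta> = sld_fisher (rho \<theta>) (vector_derivative rho (at \<theta>))"

end

theory Submission
  imports Defs "HOL-Real_Asymp.Real_Asymp"
begin

text \<open>Diagonalize \<open>\<rho> = \<Sum>\<^sub>j \<lambda>\<^sub>j |\<psi>\<^sub>j\<rangle>\<langle>\<psi>\<^sub>j|\<close>. The depolarized state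
  \<open>\<rho>\<^sup>\<epsilon>\<close> has the same eigenvectors, eigenvalues \<open>(1 - \<epsilon>) \<lambda>\<^sub>j + \<epsilon>/d > 0\<close> and derivative
  \<open>(1 - \<epsilon>) \<partial>\<rho>\<close>, so its Fisher information is
  \<open>2 (1 - \<epsilon>)\<^sup>2 \<Sum>\<^sub>j\<^sub>k |\<langle>\<psi>\<^sub>j|\<partial>\<rho>|\<psi>\<^sub>k\<rangle>|\<^sup>2 / ((1 - \<epsilon>)(\<lambda>\<^sub>j + \<lambda>\<^sub>k) + 2\<epsilon>/d)\<close>.
  Terms with \<open>\<lambda>\<^sub>j + \<lambda>\<^sub>k > 0\<close> converge to the terms of \<open>I\<^sub>F(\<rho>)\<close>; a term with
  \<open>\<lambda>\<^sub>j = \<lambda>\<^sub>k = 0\<close> is \<open>(1 - \<epsilon>)\<^sup>2 d |\<langle>\<psi>\<^sub>j|\<partial>\<rho>|\<psi>\<^sub>k\<rangle>|\<^sup>2 / (2\<epsilon>)\<close>, which vanishes when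
  \<open>\<partial>\<rho>\<close> has no component in the kernel of \<open>\<rho>\<close> and diverges otherwise. The SLD sum does not
  depend on the spectral decomposition used to write it down, so the computation applies to the
  decomposition selected in the definition of the Fisher information.\<close>

section \<open>Inner products and orthonormal bases\<close>

lemma scaleR_vec_nth: "(c *\<^sub>R (v::complex^'n)) $ i = of_real c * v $ i"
  unfolding vector_scaleR_component by (simp add: scaleR_conv_of_real)

lemma scaleR_mat_nth: "(c *\<^sub>R (M::complex^'n^'m)) $ a $ b = of_real c * M $ a $ b"
  unfolding vector_scaleR_component by (simp add: scaleR_conv_of_real)

lemma scaleR_vec_eq_smult: "c *\<^sub>R (v::complex^'n) = complex_of_real c *s v"
  unfolding vec_eq_iff scaleR_vec_nth by simp

lemma matrix_vector_mult_scaleR_complex: "A *v (c *\<^sub>R v) = c *\<^sub>R (A *v (v::complex^'n))"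
  by (simp add: scaleR_vec_eq_smult vector_scalar_commute)

lemma scaleR_matrix_vector_complex: "(c *\<^sub>R M) *v v = c *\<^sub>R (M *v (v::complex^'n))"
  by (simp add: vec_eq_iff matrix_vector_mult_def scaleR_sum_right)

lemma cinner_add_left: "cinner (u + v) w = cinner u w + cinner v w"
  by (simp add: cinner_def ring_distribs sum.distrib)

lemma cinner_add_right: "cinner u (v + w) = cinner u v + cinner u w"
  by (simp add: cinner_def ring_distribs sum.distrib)

lemma cinner_diff_right: "cinner u (v - w) = cinner u v - cinner u w"
  by (simp add: cinner_def ring_distribs sum_subtractf)

lemma cinner_smult_left: "cinner (c *s u) w = cnj c * cinner u w"
  by (simp add: cinner_def sum_distrib_left mult_ac)

lemma cinner_smult_right: "cinner u (c *s w) = c * cinner u w"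
  by (simp add: cinner_def sum_distrib_left mult_ac)

lemma cinner_scaleR_left: "cinner (c *\<^sub>R u) w = of_real c * cinner u w"
  unfolding cinner_def scaleR_vec_nth by (simp add: sum_distrib_left mult_ac)

lemma cinner_scaleR_right: "cinner u (c *\<^sub>R w) = of_real c * cinner u w"
  unfolding cinner_def scaleR_vec_nth by (simp add: sum_distrib_left mult_ac)

lemma cinner_sum_left: "cinner (\<Sum>j\<in>S. g j) u = (\<Sum>j\<in>S. cinner (g j) u)"
  by (simp add: cinner_def sum_distrib_right cnj_sum) (rule sum.swap)

lemma cinner_sum_right: "cinner u (\<Sum>j\<in>S. g j) = (\<Sum>j\<in>S. cinner u (g j))"
  by (simp add: cinner_def sum_distrib_left) (rule sum.swap)

lemma cinner_zero_right [simp]: "cinner u 0 = 0"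
  by (simp add: cinner_def)

lemma cinner_commute: "cinner v u = cnj (cinner u v)"
  by (simp add: cinner_def mult_ac)

lemma cinner_self: "cinner w w = of_real ((norm w)\<^sup>2)"
proof -
  have "(norm w)\<^sup>2 = (\<Sum>i\<in>UNIV. (cmod (w $ i))\<^sup>2)"
    unfolding norm_vec_def L2_set_def by (simp add: sum_nonneg)
  then have "of_real ((norm w)\<^sup>2) = (\<Sum>i\<in>UNIV. complex_of_real ((cmod (w $ i))\<^sup>2))"
    by simp
  also have "\<dots> = cinner w w"
    unfolding cinner_def by (intro sum.cong refl) (metis complex_norm_square mult.commute)
  finally show ?thesis by simp
qed

lemma cinner_self_eq_0: "cinner w w = 0 \<longleftrightarrow> w = 0"
  by (simp add: cinner_self)

lemma norm_add_scaleR_power2: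
  "(norm (u + t *\<^sub>R v))\<^sup>2 = (norm u)\<^sup>2 + 2 * t * Re (cinner v u) + t\<^sup>2 * (norm (v::complex^'n))\<^sup>2"
proof -
  have "complex_of_real ((norm (u + t *\<^sub>R v))\<^sup>2)
      = cinner u u + of_real t * (cinner u v + cinner v u) + of_real (t\<^sup>2) * cinner v v"
    unfolding cinner_self[symmetric]
    by (simp add: cinner_add_left cinner_add_right cinner_scaleR_left cinner_scaleR_right
        power2_eq_square algebra_simps)
  then have "(norm (u + t *\<^sub>R v))\<^sup>2
      = Re (cinner u u + of_real t * (cinner u v + cinner v u) + of_real (t\<^sup>2) * cinner v v)"
    by (metis Re_complex_of_real)
  then show ?thesis
    using cinner_commute[of u v] by (simp add: cinner_self)
qed

lemma hermitian_cinner: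
  assumes "hermitian_op A"
  shows "cinner u (A *v v) = cinner (A *v u) v"
proof -
  have herm: "\<And>i k. cnj (A $ k $ i) = A $ i $ k"
    using assms unfolding hermitian_op_def by (metis complex_cnj_cnj)
  have "cinner u (A *v v) = (\<Sum>i\<in>UNIV. \<Sum>k\<in>UNIV. cnj (u $ i) * A $ i $ k * v $ k)"
    by (simp add: cinner_def matrix_vector_mult_def sum_distrib_left mult_ac)
  also have "\<dots> = (\<Sum>k\<in>UNIV. \<Sum>i\<in>UNIV. cnj (A $ k $ i * u $ i) * v $ k)"
    by (subst sum.swap) (simp add: herm mult_ac)
  also have "\<dots> = cinner (A *v u) v"
    by (simp add: cinner_def matrix_vector_mult_def sum_distrib_right)
  finally show ?thesis .
qed

definition orthonormal_basis :: "('n::finite \<Rightarrow> complex^'n) \<Rightarrow> bool" where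
  "orthonormal_basis psi \<longleftrightarrow> (\<forall>j k. cinner (psi j) (psi k) = (if j = k then 1 else 0))"

lemma orthonormal_basis_cinner:
  "orthonormal_basis psi \<Longrightarrow> cinner (psi j) (psi k) = (if j = k then 1 else 0)"
  by (simp add: orthonormal_basis_def)

text \<open>The matrix with columns \<open>psi j\<close> has a left inverse, hence it is unitary.\<close>
lemma orthonormal_basis_completeness:
  fixes psi :: "'n::finite \<Rightarrow> complex^'n"
  assumes "orthonormal_basis psi"
  shows "(\<Sum>j\<in>UNIV. psi j $ a * cnj (psi j $ b)) = (if a = b then 1 else 0)"
proof -
  define U :: "complex^'n^'n" where "U = (\<chi> a j. psi j $ a)"
  define U' :: "complex^'n^'n" where "U' = (\<chi> j a. cnj (psi j $ a))"
  have "U' ** U = mat 1"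
    using assms unfolding orthonormal_basis_def
    by (simp add: U_def U'_def matrix_matrix_mult_def mat_def vec_eq_iff cinner_def)
  then have "(U ** U') $ a $ b = mat 1 $ a $ b"
    using matrix_left_right_inverse by metis
  then show ?thesis by (simp add: U_def U'_def matrix_matrix_mult_def mat_def)
qed

lemma orthonormal_basis_expansion:
  fixes psi :: "'n::finite \<Rightarrow> complex^'n"
  assumes "orthonormal_basis psi"
  shows "v = (\<Sum>j\<in>UNIV. cinner (psi j) v *s psi j)"
proof -
  have "(\<Sum>j\<in>UNIV. cinner (psi j) v * psi j $ a)
      = (\<Sum>i\<in>UNIV. v $ i * (\<Sum>j\<in>UNIV. psi j $ a * cnj (psi j $ i)))" for a
    by (simp add: cinner_def sum_distrib_left sum_distrib_right mult_ac) (rule sum.swap)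
  then show ?thesis
    by (simp add: vec_eq_iff orthonormal_basis_completeness[OF assms] if_distrib eq_commute
        cong: if_cong)
qed

lemma orthonormal_basis_parseval:
  assumes "orthonormal_basis psi"
  shows "(\<Sum>j\<in>UNIV. cinner x (psi j) * cinner (psi j) y) = cinner x y"
  by (subst (2) orthonormal_basis_expansion[OF assms, of y])
     (simp add: cinner_sum_right cinner_smult_right mult.commute)

lemma orthonormal_basis_eqI:
  assumes "orthonormal_basis psi" and "\<And>k. cinner (psi k) u = cinner (psi k) v"
  shows "u = v"
  using orthonormal_basis_expansion[OF assms(1), of u] orthonormal_basis_expansion[OF assms(1), of v]
    assms(2) by simp

section \<open>Spectral theorem for Hermitian matrices\<close>

lemma exists_nonzero_orthogonal:
  fixes f :: "nat \<Rightarrow> complex^'n"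
  assumes orth: "\<forall>i<k. \<forall>j<k. cinner (f i) (f j) = (if i = j then 1 else 0)"
    and "k < CARD('n)"
  shows "\<exists>w. w \<noteq> 0 \<and> (\<forall>i<k. cinner (f i) w = 0)"
proof (rule ccontr)
  assume none: "\<not> ?thesis"
  \<comment> \<open>If these residuals of the standard basis vectors all vanished, the \<open>f i\<close> would be
    complete, and taking the trace would give \<open>k = CARD('n)\<close>.\<close>
  define w where "w a = (\<chi> b. (if b = a then 1 else 0) - (\<Sum>i<k. cnj (f i $ a) * f i $ b))" for a
  have "cinner (f l) (w a) = 0" if "l < k" for l a
  proof -
    have "(\<Sum>b\<in>UNIV. \<Sum>i<k. cnj (f i $ a) * (cnj (f l $ b) * f i $ b))
        = (\<Sum>i<k. cnj (f i $ a) * cinner (f l) (f i))"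
      by (subst sum.swap) (simp add: cinner_def sum_distrib_left)
    also have "\<dots> = (\<Sum>i<k. if i = l then cnj (f i $ a) else 0)"
      by (rule sum.cong) (use orth that in auto)
    finally show ?thesis
      using that by (simp add: w_def cinner_def right_diff_distrib sum_subtractf sum_distrib_left
          mult_ac if_distrib[of "\<lambda>x. _ * x"] cong: if_cong)
  qed
  then have "w a $ a = 0" for a
    using none by (metis vec_lambda_beta zero_index)
  then have "(\<Sum>i<k. cnj (f i $ a) * f i $ a) = 1" for a
    by (simp add: w_def)
  then have "of_nat CARD('n) = (\<Sum>a\<in>UNIV. \<Sum>i<k. cnj (f i $ a) * f i $ a)"
    by simp
  also have "\<dots> = (\<Sum>i<k. cinner (f i) (f i))"
    by (subst sum.swap) (simp add: cinner_def)
  also have "\<dots> = of_nat k"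
    using orth by simp
  finally show False
    using \<open>k < CARD('n)\<close> by (simp only: of_nat_eq_iff)
qed

lemma linear_term_zero_if_quadratic_nonpos:
  fixes a b :: real
  assumes "\<forall>t. a * t + b * t\<^sup>2 \<le> 0"
  shows "a = 0"
proof (rule ccontr)
  assume "a \<noteq> 0"
  define e where "e = 1 / (\<bar>b\<bar> + 1)"
  have "e > 0" and "\<bar>b\<bar> * e < 1"
    unfolding e_def by (simp_all add: add_nonneg_pos field_simps)
  moreover have "- \<bar>b\<bar> * e \<le> b * e"
    using \<open>e > 0\<close> by (intro mult_right_mono) auto
  ultimately have "1 + b * e > 0"
    by linarith
  then have "a\<^sup>2 * e * (1 + b * e) > 0"
    using \<open>a \<noteq> 0\<close> \<open>e > 0\<close> by simp
  then have "a * (a * e) + b * (a * e)\<^sup>2 > 0"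
    by (simp add: algebra_simps power2_eq_square)
  then show False
    using assms by (metis not_le)
qed

text \<open>First variation of the Rayleigh quotient: if \<open>m\<close> maximises \<open>\<langle>w, A w\<rangle> / \<langle>w, w\<rangle>\<close> on a
  subspace \<open>W\<close>, expanding the quotient at \<open>m + t u\<close> shows that the residual \<open>A m - M m\<close> is
  orthogonal to \<open>W\<close>.\<close>
lemma hermitian_rayleigh_max_residual_orthogonal:
  fixes A :: "complex^'n^'n" and W :: "(complex^'n) set"
  assumes herm: "hermitian_op A"
    and W_add: "\<And>u w. u \<in> W \<Longrightarrow> w \<in> W \<Longrightarrow> u + w \<in> W"
    and W_smult: "\<And>z w. w \<in> W \<Longrightarrow> z *s w \<in> W"
    and "m \<in> W" and "cinner m m = 1"
    and max: "\<And>w. w \<in> W \<Longrightarrow> Re (cinner w (A *v w)) \<le> Re (cinner m (A *v m)) * (norm w)\<^sup>2"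
    and "u \<in> W"
  shows "cinner u (A *v m - complex_of_real (Re (cinner m (A *v m))) *s m) = 0"
proof -
  define q where "q w = Re (cinner w (A *v w))" for w
  define M where "M = q m"
  define z where "z = A *v m - complex_of_real M *s m"
  have Re_z: "Re (cinner v z) = 0" if "v \<in> W" for v
  proof -
    have "(2 * Re (cinner v z)) * t + (q v - M * (norm v)\<^sup>2) * t\<^sup>2 \<le> 0" for t
    proof -
      have "(norm m)\<^sup>2 = 1"
        using \<open>cinner m m = 1\<close> by (metis cinner_self of_real_eq_1_iff)
      then have "(norm (m + t *\<^sub>R v))\<^sup>2 = 1 + 2 * t * Re (cinner v m) + t\<^sup>2 * (norm v)\<^sup>2"
        by (simp add: norm_add_scaleR_power2)
      moreover have "q (m + t *\<^sub>R v) = q m + 2 * t * Re (cinner v (A *v m)) + t\<^sup>2 * q v"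
        using hermitian_cinner[OF herm, of m v] cinner_commute[of "A *v m" v]
        by (simp add: q_def matrix_vector_mult_scaleR_complex
            cinner_add_left cinner_add_right cinner_scaleR_left cinner_scaleR_right
            power2_eq_square algebra_simps)
      moreover have "q (m + t *\<^sub>R v) \<le> M * (norm (m + t *\<^sub>R v))\<^sup>2"
        using max \<open>m \<in> W\<close> \<open>v \<in> W\<close> W_add W_smult
        unfolding q_def M_def scaleR_vec_eq_smult by blast
      moreover have "Re (cinner v (A *v m)) = Re (cinner v z) + M * Re (cinner v m)"
        by (simp add: z_def cinner_diff_right cinner_smult_right)
      ultimately show ?thesis
        unfolding M_def by (simp add: algebra_simps)
    qed
    then show ?thesis
      using linear_term_zero_if_quadratic_nonpos by fastforce
  qed
  have "Re (cinner (\<i> *s u) z) = 0"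
    using Re_z W_smult \<open>u \<in> W\<close> by blast
  then have "cinner u z = 0"
    using Re_z[OF \<open>u \<in> W\<close>] by (simp add: cinner_smult_left complex_eq_iff)
  then show ?thesis
    by (simp add: z_def M_def q_def)
qed

lemma hermitian_rayleigh_max_exists:
  fixes A :: "complex^'n^'n" and W :: "(complex^'n) set"
  assumes "closed W" and W_smult: "\<And>z w. w \<in> W \<Longrightarrow> z *s w \<in> W"
    and "w0 \<in> W" "w0 \<noteq> 0"
  shows "\<exists>m\<in>W. cinner m m = 1 \<and>
    (\<forall>w\<in>W. Re (cinner w (A *v w)) \<le> Re (cinner m (A *v m)) * (norm w)\<^sup>2)"
proof -
  define q where "q w = Re (cinner w (A *v w))" for w
  define S where "S = sphere 0 1 \<inter> W"
  have normalize_in_S: "(1 / norm w) *\<^sub>R w \<in> S" if "w \<in> W" "w \<noteq> 0" for w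
    using W_smult[OF that(1), of "of_real (1 / norm w)"] that(2)
    unfolding S_def scaleR_vec_eq_smult[symmetric] by simp
  then have "S \<noteq> {}"
    using \<open>w0 \<in> W\<close> \<open>w0 \<noteq> 0\<close> by blast
  moreover have "compact S"
    unfolding S_def by (intro compact_Int_closed \<open>closed W\<close> compact_sphere)
  moreover have "continuous_on S q"
    unfolding q_def cinner_def matrix_vector_mult_def by (intro continuous_intros)
  ultimately obtain m where "m \<in> S" and m_max: "\<forall>y\<in>S. q y \<le> q m"
    using continuous_attains_sup by metis
  have q_scaleR: "q (c *\<^sub>R w) = c\<^sup>2 * q w" for c w
    by (simp add: q_def matrix_vector_mult_scaleR_complex cinner_scaleR_left cinner_scaleR_right
        power2_eq_square)
  have "q w \<le> q m * (norm w)\<^sup>2" if "w \<in> W" for w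
  proof (cases "w = 0")
    case False
    then have "q w / (norm w)\<^sup>2 \<le> q m"
      using m_max normalize_in_S[OF that] by (force simp: q_scaleR power_divide)
    then show ?thesis
      using False by (simp add: field_simps)
  qed (simp add: q_def cinner_def)
  moreover have "m \<in> W" and "cinner m m = 1"
    using \<open>m \<in> S\<close> unfolding S_def by (auto simp: cinner_self)
  ultimately show ?thesis
    unfolding q_def by blast
qed

lemma hermitian_invariant_subspace_eigenvector:
  fixes A :: "complex^'n^'n" and W :: "(complex^'n) set"
  assumes herm: "hermitian_op A" and "closed W"
    and W_add: "\<And>u w. u \<in> W \<Longrightarrow> w \<in> W \<Longrightarrow> u + w \<in> W"
    and W_smult: "\<And>z w. w \<in> W \<Longrightarrow> z *s w \<in> W"
    and W_invariant: "\<And>w. w \<in> W \<Longrightarrow> A *v w \<in> W"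
    and "w0 \<in> W" "w0 \<noteq> 0"
  shows "\<exists>m\<in>W. \<exists>M. cinner m m = 1 \<and> A *v m = complex_of_real M *s m"
proof -
  obtain m where "m \<in> W" and "cinner m m = 1" and max:
    "\<forall>w\<in>W. Re (cinner w (A *v w)) \<le> Re (cinner m (A *v m)) * (norm w)\<^sup>2"
    using hermitian_rayleigh_max_exists[OF \<open>closed W\<close> W_smult \<open>w0 \<in> W\<close> \<open>w0 \<noteq> 0\<close>] by blast
  define z where "z = A *v m - complex_of_real (Re (cinner m (A *v m))) *s m"
  have "z \<in> W"
    unfolding z_def diff_conv_add_uminus
    using W_add W_smult W_invariant \<open>m \<in> W\<close> by (metis scaleR_minus1_left scaleR_vec_eq_smult)
  then have "cinner z z = 0"
    using hermitian_rayleigh_max_residual_orthogonal[OF herm W_add W_smult \<open>m \<in> W\<close>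
        \<open>cinner m m = 1\<close>] max
    unfolding z_def by blast
  then show ?thesis
    using \<open>m \<in> W\<close> \<open>cinner m m = 1\<close> unfolding cinner_self_eq_0 z_def by auto
qed

lemma hermitian_eigenvector_orthogonal:
  fixes A :: "complex^'n^'n" and f :: "nat \<Rightarrow> complex^'n"
  assumes herm: "hermitian_op A"
    and orth: "\<forall>i<k. \<forall>j<k. cinner (f i) (f j) = (if i = j then 1 else 0)"
    and eig: "\<forall>i<k. A *v f i = complex_of_real (lam i) *s f i"
    and "k < CARD('n)"
  shows "\<exists>m M. (\<forall>i<k. cinner (f i) m = 0) \<and> cinner m m = 1 \<and> A *v m = complex_of_real M *s m"
proof -
  define W where "W = {w::complex^'n. \<forall>i<k. cinner (f i) w = 0}"
  have "closed W"
  proof -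
    have "closed {w. cinner (f i) w = 0}" for i
      unfolding cinner_def by (intro closed_Collect_eq continuous_intros)
    moreover have "W = (\<Inter>i\<in>{..<k}. {w. cinner (f i) w = 0})"
      unfolding W_def by auto
    ultimately show ?thesis by auto
  qed
  moreover have "A *v w \<in> W" if "w \<in> W" for w
    using that eig unfolding W_def
    by (simp add: hermitian_cinner[OF herm] cinner_smult_left)
  moreover obtain w0 where "w0 \<in> W" "w0 \<noteq> 0"
    using exists_nonzero_orthogonal[OF orth \<open>k < CARD('n)\<close>] unfolding W_def by blast
  ultimately have "\<exists>m\<in>W. \<exists>M. cinner m m = 1 \<and> A *v m = complex_of_real M *s m"
    by (intro hermitian_invariant_subspace_eigenvector[OF herm])
       (auto simp: W_def cinner_add_right cinner_smult_right)
  then show ?thesis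
    unfolding W_def by blast
qed

lemma hermitian_orthonormal_eigenvectors:
  fixes A :: "complex^'n^'n"
  assumes "hermitian_op A" and "k \<le> CARD('n)"
  shows "\<exists>f lam. (\<forall>i<k. \<forall>j<k. cinner (f i) (f j) = (if i = j then 1 else 0))
            \<and> (\<forall>i<k. A *v f i = complex_of_real (lam i) *s f i)"
  using \<open>k \<le> CARD('n)\<close>
proof (induction k)
  case (Suc k)
  then obtain f lam where orth: "\<forall>i<k. \<forall>j<k. cinner (f i) (f j) = (if i = j then 1 else 0)"
    and eig: "\<forall>i<k. A *v f i = complex_of_real (lam i) *s f i"
    by auto
  obtain m M where m: "\<forall>i<k. cinner (f i) m = 0" "cinner m m = 1"
      "A *v m = complex_of_real M *s m"
    using hermitian_eigenvector_orthogonal[OF assms(1) orth eig] Suc.prems by auto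
  then have "\<forall>i<k. cinner m (f i) = 0"
    by (metis cinner_commute complex_cnj_zero)
  show ?case
  proof (intro exI conjI)
    show "\<forall>i<Suc k. \<forall>j<Suc k. cinner ((f(k := m)) i) ((f(k := m)) j) = (if i = j then 1 else 0)"
      using orth m \<open>\<forall>i<k. cinner m (f i) = 0\<close> by (auto simp: less_Suc_eq)
    show "\<forall>i<Suc k. A *v (f(k := m)) i = complex_of_real ((lam(k := M)) i) *s (f(k := m)) i"
      using eig m by (auto simp: less_Suc_eq)
  qed
qed simp

lemma hermitian_spectral_decomp:
  fixes A :: "complex^'n^'n"
  assumes "hermitian_op A"
  shows "\<exists>lam psi. is_spectral_decomp A lam psi"
proof -
  obtain f lam where
    orth: "\<forall>i<CARD('n). \<forall>j<CARD('n). cinner (f i) (f j) = (if i = j then 1 else 0)"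
    and eig: "\<forall>i<CARD('n). A *v f i = complex_of_real (lam i) *s f i"
    using hermitian_orthonormal_eigenvectors[OF assms order_refl] by auto
  obtain h where h: "bij_betw h (UNIV::'n set) {0..<CARD('n)}"
    using ex_bij_betw_finite_nat[of "UNIV::'n set"] by auto
  define psi where "psi j = f (h j)" for j
  define mu where "mu j = lam (h j)" for j
  have "h j < CARD('n)" and "h j = h k \<longleftrightarrow> j = k" for j k
    using h by (auto simp: bij_betw_def inj_on_def)
  then have onb: "orthonormal_basis psi"
    and eig_psi: "A *v psi j = complex_of_real (mu j) *s psi j" for j
    unfolding orthonormal_basis_def psi_def mu_def using orth eig by simp_all
  have "A $ a $ b = (\<Sum>j\<in>UNIV. complex_of_real (mu j) * outer (psi j) (psi j) $ a $ b)" for a b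
  proof -
    have "A $ a $ b = (\<Sum>c\<in>UNIV. A $ a $ c * (\<Sum>j\<in>UNIV. psi j $ c * cnj (psi j $ b)))"
      by (simp add: orthonormal_basis_completeness[OF onb] if_distrib[of "\<lambda>x. _ * x"] cong: if_cong)
    also have "\<dots> = (\<Sum>j\<in>UNIV. (A *v psi j) $ a * cnj (psi j $ b))"
      by (simp add: matrix_vector_mult_def sum_distrib_left sum_distrib_right mult_ac)
         (rule sum.swap)
    also have "\<dots> = (\<Sum>j\<in>UNIV. complex_of_real (mu j) * outer (psi j) (psi j) $ a $ b)"
      by (simp add: eig_psi outer_def mult_ac)
    finally show ?thesis .
  qed
  then have "is_spectral_decomp A mu psi"
    using onb unfolding is_spectral_decomp_def orthonormal_basis_def by (simp add: vec_eq_iff)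
  then show ?thesis by blast
qed

lemma spectral_decomp_orthonormal: "is_spectral_decomp A lam psi \<Longrightarrow> orthonormal_basis psi"
  by (simp add: is_spectral_decomp_def orthonormal_basis_def)

lemma spectral_decomp_entry:
  "is_spectral_decomp A lam psi \<Longrightarrow>
     A $ a $ b = (\<Sum>j\<in>UNIV. complex_of_real (lam j) * (psi j $ a * cnj (psi j $ b)))"
  unfolding is_spectral_decomp_def by (simp add: outer_def)

lemma spectral_decomp_intro:
  assumes "orthonormal_basis psi"
    and "\<And>a b. A $ a $ b = (\<Sum>j\<in>UNIV. complex_of_real (lam j) * (psi j $ a * cnj (psi j $ b)))"
  shows "is_spectral_decomp A lam psi"
  using assms unfolding is_spectral_decomp_def orthonormal_basis_def
  by (simp add: vec_eq_iff outer_def)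

lemma spectral_decomp_apply:
  assumes "is_spectral_decomp A lam psi"
  shows "A *v v = (\<Sum>j\<in>UNIV. (complex_of_real (lam j) * cinner (psi j) v) *s psi j)"
  unfolding vec_eq_iff
  by (simp add: matrix_vector_mult_def spectral_decomp_entry[OF assms] cinner_def
      sum_distrib_left sum_distrib_right mult_ac) (rule allI, rule sum.swap)

lemma spectral_decomp_cinner:
  assumes "is_spectral_decomp A lam psi"
  shows "cinner (psi k) (A *v v) = complex_of_real (lam k) * cinner (psi k) v"
  using orthonormal_basis_cinner[OF spectral_decomp_orthonormal[OF assms]]
  by (simp add: spectral_decomp_apply[OF assms] cinner_sum_right cinner_smult_right
      if_distrib[of "\<lambda>x. _ * x"] cong: if_cong)

lemma spectral_decomp_eigenvector:
  assumes "is_spectral_decomp A lam psi"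
  shows "A *v psi k = complex_of_real (lam k) *s psi k"
  using orthonormal_basis_cinner[OF spectral_decomp_orthonormal[OF assms]]
  by (simp add: spectral_decomp_apply[OF assms] if_distrib[of "\<lambda>x. _ * x"]
      if_distrib[of "\<lambda>x. x *s _"] cong: if_cong)

lemma spectral_decomp_hermitian: "is_spectral_decomp A lam psi \<Longrightarrow> hermitian_op A"
  unfolding hermitian_op_def by (simp add: spectral_decomp_entry mult_ac)

lemma spectral_decomp_nonneg:
  assumes "is_spectral_decomp A lam psi" and "\<forall>v. 0 \<le> Re (cinner v (A *v v))"
  shows "0 \<le> lam j"
  using assms(2) orthonormal_basis_cinner[OF spectral_decomp_orthonormal[OF assms(1)]]
  by (metis Re_complex_of_real mult.right_neutral spectral_decomp_cinner[OF assms(1)])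

lemma spectral_decomp_kernel:
  assumes "is_spectral_decomp A lam psi"
  shows "A *v v = 0 \<longleftrightarrow> (\<forall>k. lam k = 0 \<or> cinner (psi k) v = 0)"
proof
  assume "A *v v = 0"
  then have "cinner (psi k) (A *v v) = 0" for k
    by simp
  then show "\<forall>k. lam k = 0 \<or> cinner (psi k) v = 0"
    by (simp add: spectral_decomp_cinner[OF assms])
next
  assume "\<forall>k. lam k = 0 \<or> cinner (psi k) v = 0"
  then show "A *v v = 0"
    by (intro orthonormal_basis_eqI[OF spectral_decomp_orthonormal[OF assms]])
       (auto simp: spectral_decomp_cinner[OF assms])
qed

lemma spectral_decomp_depolarize:
  assumes sd: "is_spectral_decomp A lam psi"
  shows "is_spectral_decomp ((1 - e) *\<^sub>R A + c *\<^sub>R mat 1) (\<lambda>j. (1 - e) * lam j + c) psi"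
proof (rule spectral_decomp_intro[OF spectral_decomp_orthonormal[OF sd]])
  fix a b
  have "((1 - e) *\<^sub>R A + c *\<^sub>R mat 1) $ a $ b
      = complex_of_real (1 - e) * A $ a $ b + complex_of_real c * (if a = b then 1 else 0)"
    unfolding vector_add_component scaleR_mat_nth by (simp add: mat_def)
  also have "\<dots> = complex_of_real (1 - e) * (\<Sum>j\<in>UNIV. complex_of_real (lam j) * (psi j $ a * cnj (psi j $ b)))
       + complex_of_real c * (\<Sum>j\<in>UNIV. psi j $ a * cnj (psi j $ b))"
    by (simp add: spectral_decomp_entry[OF sd]
        orthonormal_basis_completeness[OF spectral_decomp_orthonormal[OF sd]])
  also have "\<dots> = (\<Sum>j\<in>UNIV. complex_of_real ((1 - e) * lam j + c) * (psi j $ a * cnj (psi j $ b)))"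
    by (simp add: sum_distrib_left sum.distrib[symmetric] ring_distribs mult_ac)
  finally show "((1 - e) *\<^sub>R A + c *\<^sub>R mat 1) $ a $ b
      = (\<Sum>j\<in>UNIV. complex_of_real ((1 - e) * lam j + c) * (psi j $ a * cnj (psi j $ b)))" .
qed

section \<open>Eigenvalue-weighted sums\<close>

definition eigen_weighted_sum ::
  "(real \<Rightarrow> real \<Rightarrow> real) \<Rightarrow> complex^'n^'n \<Rightarrow> ('n::finite \<Rightarrow> real) \<Rightarrow> ('n \<Rightarrow> complex^'n) \<Rightarrow> real"
  where "eigen_weighted_sum h D lam psi =
    (\<Sum>j\<in>UNIV. \<Sum>k\<in>UNIV. h (lam j) (lam k) * (cmod (cinner (psi j) (D *v psi k)))\<^sup>2)"

lemma unitary_preserves_inner: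
  fixes U :: "'n::finite \<Rightarrow> 'm::finite \<Rightarrow> complex"
  assumes "\<And>a b. (\<Sum>k\<in>UNIV. U a k * cnj (U b k)) = (if a = b then 1 else 0)"
  shows "(\<Sum>k\<in>UNIV. (\<Sum>b\<in>UNIV. x b * U b k) * cnj (\<Sum>b\<in>UNIV. y b * U b k))
    = (\<Sum>b\<in>UNIV. x b * cnj (y b))"
proof -
  have "(\<Sum>k\<in>UNIV. (\<Sum>b\<in>UNIV. x b * U b k) * cnj (\<Sum>b\<in>UNIV. y b * U b k))
      = (\<Sum>k\<in>UNIV. \<Sum>b'\<in>UNIV. \<Sum>b\<in>UNIV. x b * (cnj (y b') * (U b k * cnj (U b' k))))"
    by (simp add: sum_distrib_left sum_distrib_right mult_ac cnj_sum)
  also have "\<dots> = (\<Sum>b'\<in>UNIV. \<Sum>b\<in>UNIV. \<Sum>k\<in>UNIV. x b * (cnj (y b') * (U b k * cnj (U b' k))))"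
    by (subst sum.swap) (rule sum.cong[OF refl], rule sum.swap)
  also have "\<dots> = (\<Sum>b'\<in>UNIV. \<Sum>b\<in>UNIV. x b * cnj (y b') * (\<Sum>k\<in>UNIV. U b k * cnj (U b' k)))"
    by (simp add: sum_distrib_left mult_ac)
  also have "\<dots> = (\<Sum>b\<in>UNIV. x b * cnj (y b))"
    by (simp add: assms if_distrib[of "\<lambda>x. _ * x"] cong: if_cong)
  finally show ?thesis .
qed

lemma orthonormal_basis_overlap_unitary:
  assumes "orthonormal_basis psi" and "orthonormal_basis phi"
  shows "(\<Sum>j\<in>UNIV. cinner (phi a) (psi j) * cnj (cinner (phi b) (psi j))) = (if a = b then 1 else 0)"
  by (simp flip: cinner_commute
      add: orthonormal_basis_parseval[OF assms(1)] orthonormal_basis_cinner[OF assms(2)])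

lemma orthonormal_basis_change_matrix_element:
  assumes "orthonormal_basis phi"
  shows "cinner (psi j) (D *v psi k) = (\<Sum>b\<in>UNIV. (\<Sum>a\<in>UNIV.
    cnj (cinner (phi a) (psi j)) * cinner (phi a) (D *v phi b)) * cinner (phi b) (psi k))"
  by (subst (1 2) orthonormal_basis_expansion[OF assms])
     (simp add: cinner_sum_left cinner_sum_right cinner_smult_left cinner_smult_right vec.sum
       vector_scalar_commute sum_distrib_left sum_distrib_right mult_ac)

lemma spectral_decomp_overlap_eigenvalue:
  assumes "is_spectral_decomp A lam psi" and "is_spectral_decomp A mu phi"
    and "cinner (phi a) (psi j) \<noteq> 0"
  shows "lam j = mu a"
proof -
  have "complex_of_real (lam j) * cinner (phi a) (psi j) = cinner (phi a) (A *v psi j)"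
    by (simp add: spectral_decomp_eigenvector[OF assms(1)] cinner_smult_right)
  also have "\<dots> = complex_of_real (mu a) * cinner (phi a) (psi j)"
    by (rule spectral_decomp_cinner[OF assms(2)])
  finally show ?thesis
    using assms(3) by simp
qed

text \<open>Overlaps \<open>\<langle>phi a, psi j\<rangle>\<close> vanish between different eigenvalues, so the weights
  \<open>h (lam j) (lam k)\<close> pass through the unitary change of basis.\<close>
lemma eigen_weighted_sum_basis_independent:
  assumes sd1: "is_spectral_decomp A lam psi" and sd2: "is_spectral_decomp A mu phi"
  shows "eigen_weighted_sum h D lam psi = eigen_weighted_sum h D mu phi"
proof -
  have onb_psi: "orthonormal_basis psi" and onb_phi: "orthonormal_basis phi"
    using sd1 sd2 by (simp_all add: spectral_decomp_orthonormal)
  define U where "U a j = cinner (phi a) (psi j)" for a j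
  define Y where "Y a b = cinner (phi a) (D *v phi b)" for a b
  define Z where "Z a b = complex_of_real (h (mu a) (mu b)) * Y a b" for a b
  define X where "X j k = cinner (psi j) (D *v psi k)" for j k
  have X_eq: "X j k = (\<Sum>b\<in>UNIV. (\<Sum>a\<in>UNIV. cnj (U a j) * Y a b) * U b k)" for j k
    unfolding X_def Y_def U_def by (rule orthonormal_basis_change_matrix_element[OF onb_phi])
  have hX_eq: "complex_of_real (h (lam j) (lam k)) * X j k
      = (\<Sum>b\<in>UNIV. (\<Sum>a\<in>UNIV. cnj (U a j) * Z a b) * U b k)" for j k
  proof -
    have weight: "complex_of_real (h (lam j) (lam k)) * (cnj (U a j) * Y a b * U b k)
        = cnj (U a j) * Z a b * U b k" for a b
      using spectral_decomp_overlap_eigenvalue[OF sd1 sd2]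
      by (cases "U a j = 0 \<or> U b k = 0") (auto simp: Z_def U_def)
    have "complex_of_real (h (lam j) (lam k)) * X j k = (\<Sum>b\<in>UNIV. \<Sum>a\<in>UNIV.
        complex_of_real (h (lam j) (lam k)) * (cnj (U a j) * Y a b * U b k))"
      by (simp add: X_eq sum_distrib_left sum_distrib_right mult_ac)
    also have "\<dots> = (\<Sum>b\<in>UNIV. \<Sum>a\<in>UNIV. cnj (U a j) * Z a b * U b k)"
      by (simp only: weight)
    finally show ?thesis
      by (simp add: sum_distrib_right)
  qed
  have U_rows: "(\<Sum>j\<in>UNIV. U a j * cnj (U b j)) = (if a = b then 1 else 0)" for a b
    unfolding U_def by (rule orthonormal_basis_overlap_unitary[OF onb_psi onb_phi])
  then have U_rows_cnj: "(\<Sum>j\<in>UNIV. cnj (U a j) * cnj (cnj (U b j))) = (if a = b then 1 else 0)"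
    for a b
    by (metis (no_types, lifting) cnj_sum complex_cnj_mult complex_cnj_one complex_cnj_zero
        sum.cong)
  have "complex_of_real (eigen_weighted_sum h D lam psi)
      = (\<Sum>j\<in>UNIV. \<Sum>k\<in>UNIV. (complex_of_real (h (lam j) (lam k)) * X j k) * cnj (X j k))"
    unfolding eigen_weighted_sum_def X_def
    by (simp add: complex_norm_square[unfolded of_real_power] mult_ac)
  also have "\<dots> = (\<Sum>j\<in>UNIV. \<Sum>b\<in>UNIV.
      (\<Sum>a\<in>UNIV. cnj (U a j) * Z a b) * cnj (\<Sum>a\<in>UNIV. cnj (U a j) * Y a b))"
    unfolding hX_eq by (subst X_eq) (simp only: unitary_preserves_inner[of U, OF U_rows])
  also have "\<dots> = (\<Sum>b\<in>UNIV. \<Sum>j\<in>UNIV.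
      (\<Sum>a\<in>UNIV. Z a b * cnj (U a j)) * cnj (\<Sum>a\<in>UNIV. Y a b * cnj (U a j)))"
    by (subst sum.swap) (simp add: mult.commute)
  also have "\<dots> = (\<Sum>b\<in>UNIV. \<Sum>a\<in>UNIV. Z a b * cnj (Y a b))"
    by (simp only: unitary_preserves_inner[of "\<lambda>a j. cnj (U a j)", OF U_rows_cnj])
  also have "\<dots> = complex_of_real (eigen_weighted_sum h D mu phi)"
    unfolding eigen_weighted_sum_def Z_def Y_def
    by (subst sum.swap) (simp add: complex_norm_square[unfolded of_real_power] mult_ac)
  finally show ?thesis
    by simp
qed

lemma eigen_weighted_sum_scaleR:
  "eigen_weighted_sum h (c *\<^sub>R D) lam psi = c\<^sup>2 * eigen_weighted_sum h D lam psi"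
  unfolding eigen_weighted_sum_def
  by (simp add: scaleR_matrix_vector_complex cinner_scaleR_right norm_mult
      power_mult_distrib sum_distrib_left mult_ac)

lemma eigen_weighted_sum_ge_term:
  assumes "\<And>x y. 0 \<le> h x y"
  shows "h (lam j) (lam k) * (cmod (cinner (psi j) (D *v psi k)))\<^sup>2 \<le> eigen_weighted_sum h D lam psi"
proof -
  have "h (lam j) (lam k) * (cmod (cinner (psi j) (D *v psi k)))\<^sup>2
      \<le> (\<Sum>k\<in>UNIV. h (lam j) (lam k) * (cmod (cinner (psi j) (D *v psi k)))\<^sup>2)"
    by (rule member_le_sum) (simp_all add: assms)
  also have "\<dots> \<le> eigen_weighted_sum h D lam psi"
    unfolding eigen_weighted_sum_def
    by (rule member_le_sum) (simp_all add: assms sum_nonneg)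
  finally show ?thesis .
qed

section \<open>The kernel projection\<close>

lemma hermitian_idempotent_orthogonal:
  assumes "hermitian_op P" and "P ** P = P"
  shows "cinner (P *v w) (y - P *v y) = 0"
proof -
  have "P *v (y - P *v y) = 0"
    using assms(2) by (simp add: matrix_vector_mult_diff_distrib matrix_vector_mul_assoc)
  then show ?thesis
    by (simp flip: hermitian_cinner[OF assms(1)])
qed

lemma hermitian_idempotent_eqI:
  fixes P Q :: "complex^'n^'n"
  assumes "hermitian_op P" "P ** P = P" "hermitian_op Q" "Q ** Q = Q"
    and range_eq: "range (\<lambda>y. P *v y) = range (\<lambda>y. Q *v y)"
  shows "P = Q"
  unfolding matrix_eq
proof
  fix y
  define d where "d = P *v y - Q *v y"
  obtain y' where "Q *v y = P *v y'"
    using range_eq by (metis rangeI rangeE)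
  then have "d = P *v (y - y')"
    by (simp add: d_def matrix_vector_mult_diff_distrib)
  then have "cinner d (y - P *v y) = 0"
    using hermitian_idempotent_orthogonal[OF assms(1,2)] by simp
  obtain y'' where "d = Q *v y''"
    using range_eq \<open>d = P *v (y - y')\<close> by (metis rangeI rangeE)
  then have "cinner d (y - Q *v y) = 0"
    using hermitian_idempotent_orthogonal[OF assms(3,4)] by simp
  moreover have "cinner d d = cinner d (y - Q *v y) - cinner d (y - P *v y)"
    by (simp add: d_def cinner_diff_right)
  ultimately have "cinner d d = 0"
    using \<open>cinner d (y - P *v y) = 0\<close> by simp
  then have "d = 0"
    by (simp add: cinner_self_eq_0)
  then show "P *v y = Q *v y"
    by (simp add: d_def)
qed

definition zero_eigen_proj :: "('n::finite \<Rightarrow> real) \<Rightarrow> ('n \<Rightarrow> complex^'n) \<Rightarrow> complex^'n^'n" where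
  "zero_eigen_proj lam psi = (\<chi> a b. \<Sum>j\<in>UNIV. if lam j = 0 then psi j $ a * cnj (psi j $ b) else 0)"

lemma zero_eigen_proj_apply:
  "zero_eigen_proj lam psi *v y = (\<Sum>j\<in>UNIV. (if lam j = 0 then cinner (psi j) y else 0) *s psi j)"
proof -
  have "(zero_eigen_proj lam psi *v y) $ i
      = (\<Sum>j\<in>UNIV. \<Sum>x\<in>UNIV. if lam x = 0 then y $ j * (psi x $ i * cnj (psi x $ j)) else 0)" for i
    by (simp add: zero_eigen_proj_def matrix_vector_mult_def sum_distrib_left mult_ac
        if_distrib[of "\<lambda>x. _ * x"] cong: if_cong)
  also have "\<dots> i = (\<Sum>x\<in>UNIV. if lam x = 0 then cinner (psi x) y * psi x $ i else 0)" for i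
    by (subst sum.swap) (rule sum.cong[OF refl], auto simp: cinner_def sum_distrib_left mult_ac)
  finally show ?thesis
    by (auto simp: vec_eq_iff intro!: sum.cong)
qed

lemma cinner_zero_eigen_proj:
  assumes "orthonormal_basis psi"
  shows "cinner (psi k) (zero_eigen_proj lam psi *v y) = (if lam k = 0 then cinner (psi k) y else 0)"
  by (simp add: zero_eigen_proj_apply cinner_sum_right cinner_smult_right
      orthonormal_basis_cinner[OF assms] if_distrib[of "\<lambda>x. _ * x"] cong: if_cong)

lemma hermitian_zero_eigen_proj: "hermitian_op (zero_eigen_proj lam psi)"
  unfolding hermitian_op_def zero_eigen_proj_def
  by (simp add: cnj_sum if_distrib[where f=cnj] mult.commute cong: if_cong)

lemma zero_eigen_proj_idempotent:
  assumes "orthonormal_basis psi"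
  shows "zero_eigen_proj lam psi ** zero_eigen_proj lam psi = zero_eigen_proj lam psi"
  unfolding matrix_eq
  by (intro allI orthonormal_basis_eqI[OF assms])
     (simp add: matrix_vector_mul_assoc[symmetric] cinner_zero_eigen_proj[OF assms])

lemma range_zero_eigen_proj:
  assumes sd: "is_spectral_decomp A lam psi"
  shows "range (\<lambda>y. zero_eigen_proj lam psi *v y) = {v. A *v v = 0}"
proof (intro set_eqI iffI)
  have onb: "orthonormal_basis psi"
    using sd by (rule spectral_decomp_orthonormal)
  fix v
  show "v \<in> {v. A *v v = 0}" if "v \<in> range (\<lambda>y. zero_eigen_proj lam psi *v y)"
    using that by (auto simp: spectral_decomp_kernel[OF sd] cinner_zero_eigen_proj[OF onb]
        split: if_splits)
  show "v \<in> range (\<lambda>y. zero_eigen_proj lam psi *v y)" if "v \<in> {v. A *v v = 0}"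
  proof -
    have "zero_eigen_proj lam psi *v v = v"
      using that by (intro orthonormal_basis_eqI[OF onb])
        (auto simp: cinner_zero_eigen_proj[OF onb] spectral_decomp_kernel[OF sd])
    then show ?thesis
      by (metis rangeI)
  qed
qed

lemma kernel_proj_spectral:
  assumes sd: "is_spectral_decomp A lam psi"
  shows "kernel_proj A = zero_eigen_proj lam psi"
  unfolding kernel_proj_def
proof (rule the_equality)
  have onb: "orthonormal_basis psi"
    using sd by (rule spectral_decomp_orthonormal)
  show "hermitian_op (zero_eigen_proj lam psi) \<and>
      zero_eigen_proj lam psi ** zero_eigen_proj lam psi = zero_eigen_proj lam psi \<and>
      range (\<lambda>y. zero_eigen_proj lam psi *v y) = {v. A *v v = 0}"
    using hermitian_zero_eigen_proj zero_eigen_proj_idempotent[OF onb] range_zero_eigen_proj[OF sd]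
    by blast
  show "P = zero_eigen_proj lam psi"
    if "hermitian_op P \<and> P ** P = P \<and> range (\<lambda>y. P *v y) = {v. A *v v = 0}" for P
    using that hermitian_idempotent_eqI[OF _ _ hermitian_zero_eigen_proj zero_eigen_proj_idempotent[OF onb]]
      range_zero_eigen_proj[OF sd] by metis
qed

lemma zero_eigen_proj_sandwich_eq_0_iff:
  assumes onb: "orthonormal_basis psi"
  shows "zero_eigen_proj lam psi ** D ** zero_eigen_proj lam psi = 0 \<longleftrightarrow>
    (\<forall>j k. lam j = 0 \<and> lam k = 0 \<longrightarrow> cinner (psi j) (D *v psi k) = 0)"
proof -
  let ?P = "zero_eigen_proj lam psi"
  have sandwich: "cinner (psi j) ((?P ** D ** ?P) *v y)
      = (if lam j = 0 then cinner (psi j) (D *v (?P *v y)) else 0)" for j y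
    by (simp add: matrix_vector_mul_assoc[symmetric] cinner_zero_eigen_proj[OF onb])
  have fixed: "?P *v psi k = psi k" if "lam k = 0" for k
    using that by (intro orthonormal_basis_eqI[OF onb])
      (simp add: cinner_zero_eigen_proj[OF onb] orthonormal_basis_cinner[OF onb])
  show ?thesis
  proof
    assume "?P ** D ** ?P = 0"
    show "\<forall>j k. lam j = 0 \<and> lam k = 0 \<longrightarrow> cinner (psi j) (D *v psi k) = 0"
    proof (intro allI impI)
      fix j k assume "lam j = 0 \<and> lam k = 0"
      then have "cinner (psi j) (D *v psi k) = cinner (psi j) ((?P ** D ** ?P) *v psi k)"
        by (simp add: sandwich fixed)
      then show "cinner (psi j) (D *v psi k) = 0"
        using \<open>?P ** D ** ?P = 0\<close> by simp
    qed
  next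
    assume zero: "\<forall>j k. lam j = 0 \<and> lam k = 0 \<longrightarrow> cinner (psi j) (D *v psi k) = 0"
    have "cinner (psi j) (D *v (?P *v y)) = 0" if "lam j = 0" for j y
      using zero that
      by (simp add: zero_eigen_proj_apply vec.sum cinner_sum_right)
         (auto intro!: sum.neutral simp: vector_scalar_commute cinner_smult_right)
    then show "?P ** D ** ?P = 0"
      unfolding matrix_eq
      by (intro allI orthonormal_basis_eqI[OF onb]) (simp add: sandwich)
  qed
qed

section \<open>The SLD Fisher information in spectral form\<close>

definition sld_weight :: "real \<Rightarrow> real \<Rightarrow> real" where
  "sld_weight x y = (if x + y > 0 then 1 / (x + y) else 0)"

lemma sld_weight_nonneg: "0 \<le> sld_weight x y"
  by (simp add: sld_weight_def)

lemma sum_positive_pairs_eq_eigen_weighted_sum: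
  "(\<Sum>(j,k)\<in>{(j,k). lam j + lam k > 0}. (cmod (cinner (psi j) (D *v psi k)))\<^sup>2 / (lam j + lam k))
    = eigen_weighted_sum sld_weight D lam (psi :: 'n::finite \<Rightarrow> complex^'n)"
proof -
  let ?g = "\<lambda>j k. (cmod (cinner (psi j) (D *v psi k)))\<^sup>2 / (lam j + lam k)"
  have "(\<Sum>(j,k)\<in>{(j,k). lam j + lam k > 0}. ?g j k)
      = (\<Sum>(j,k)\<in>{x\<in>UNIV. case x of (j,k) \<Rightarrow> lam j + lam k > 0}. ?g j k)"
    by (rule sum.cong) auto
  also have "\<dots> = (\<Sum>(j,k)\<in>UNIV \<times> UNIV. if lam j + lam k > 0 then ?g j k else 0)"
    by (subst sum.inter_filter) (auto intro!: sum.cong)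
  also have "\<dots> = eigen_weighted_sum sld_weight D lam psi"
    unfolding eigen_weighted_sum_def sld_weight_def sum.cartesian_product[symmetric]
    by (intro sum.cong refl) auto
  finally show ?thesis .
qed

text \<open>By basis independence, the decomposition chosen by \<open>SOME\<close> in \<open>sld_fisher\<close> may be
  replaced by any given one.\<close>
lemma sld_fisher_spectral:
  assumes sd: "is_spectral_decomp A lam psi"
  shows "sld_fisher A D =
    (if \<forall>j k. lam j = 0 \<and> lam k = 0 \<longrightarrow> cinner (psi j) (D *v psi k) = 0
     then ereal (2 * eigen_weighted_sum sld_weight D lam psi) else \<infinity>)"
proof -
  have "\<exists>p. case p of (l, ps) \<Rightarrow> is_spectral_decomp A l ps"
    using hermitian_spectral_decomp[OF spectral_decomp_hermitian[OF sd]] by auto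
  then obtain l ps where chosen: "(SOME (l, ps). is_spectral_decomp A l ps) = (l, ps)"
    and "is_spectral_decomp A l ps"
    by (metis (mono_tags, lifting) case_prodE someI_ex)
  then have "eigen_weighted_sum sld_weight D l ps = eigen_weighted_sum sld_weight D lam psi"
    using eigen_weighted_sum_basis_independent[OF _ sd] by blast
  then show ?thesis
    unfolding sld_fisher_def kernel_proj_spectral[OF sd]
      zero_eigen_proj_sandwich_eq_0_iff[OF spectral_decomp_orthonormal[OF sd]] chosen
    by (simp add: sum_positive_pairs_eq_eigen_weighted_sum)
qed

section \<open>Depolarization\<close>

lemma tendsto_sld_weight_depolarized:
  fixes l1 l2 d :: real
  assumes "0 \<le> l1" "0 \<le> l2" "0 < d" "0 < l1 + l2"
  shows "((\<lambda>e. sld_weight ((1 - e) * l1 + e / d) ((1 - e) * l2 + e / d)) \<longlongrightarrow> sld_weight l1 l2)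
    (at_right 0)"
proof -
  have eq: "\<forall>\<^sub>F e in at_right 0. 1 / ((1 - e) * (l1 + l2) + 2 * e / d)
      = sld_weight ((1 - e) * l1 + e / d) ((1 - e) * l2 + e / d)"
  proof (rule eventually_mono[OF eventually_at_right_real[of 0 1]])
    fix e :: real assume "e \<in> {0<..<1}"
    then have "0 < (1 - e) * (l1 + l2) + 2 * e / d"
      using assms by (simp add: add_pos_pos)
    then show "1 / ((1 - e) * (l1 + l2) + 2 * e / d)
        = sld_weight ((1 - e) * l1 + e / d) ((1 - e) * l2 + e / d)"
      by (simp add: sld_weight_def algebra_simps)
  qed simp
  have "((\<lambda>e. 1 / ((1 - e) * (l1 + l2) + 2 * e / d)) \<longlongrightarrow> sld_weight l1 l2) (at_right 0)"
    using assms by (auto simp: sld_weight_def intro!: tendsto_eq_intros)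
  then show ?thesis
    using tendsto_cong[OF eq] by simp
qed

lemma sld_weight_depolarized_at_top:
  fixes d x :: real
  assumes "0 < d" "0 < x"
  shows "filterlim (\<lambda>e. (1 - e)\<^sup>2 * (sld_weight (e / d) (e / d) * x)) at_top (at_right 0)"
proof -
  have eq: "\<forall>\<^sub>F e in at_right 0. (1 - e)\<^sup>2 * x * d / (2 * e) = (1 - e)\<^sup>2 * (sld_weight (e / d) (e / d) * x)"
    by (rule eventually_mono[OF eventually_at_right_real[of 0 1]])
       (use assms in \<open>auto simp: sld_weight_def field_simps\<close>)
  have "filterlim (\<lambda>e. (1 - e)\<^sup>2 * x * d / (2 * e)) at_top (at_right 0)"
    using assms by real_asymp
  then show ?thesis
    using filterlim_cong[OF refl refl eq] by simp
qed

lemma sld_fisher_depolarized: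
  fixes A D :: "complex^'n^'n"
  assumes sd: "is_spectral_decomp A lam psi" and lam_nonneg: "\<And>j. 0 \<le> lam j"
    and "0 < d" "0 < e" "e < 1"
  shows "sld_fisher ((1 - e) *\<^sub>R A + (e / d) *\<^sub>R mat 1) ((1 - e) *\<^sub>R D)
    = ereal (2 * ((1 - e)\<^sup>2 * eigen_weighted_sum sld_weight D (\<lambda>j. (1 - e) * lam j + e / d) psi))"
proof -
  have "0 < (1 - e) * lam j + e / d" for j
    using lam_nonneg[of j] assms(3-5) by (intro add_nonneg_pos mult_nonneg_nonneg divide_pos_pos) auto
  then have "(1 - e) * lam j + e / d \<noteq> 0" for j
    by (metis less_irrefl)
  then show ?thesis
    by (simp add: sld_fisher_spectral[OF spectral_decomp_depolarize[OF sd]] eigen_weighted_sum_scaleR)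
qed

lemma tendsto_eigen_weighted_sum_depolarized:
  assumes lam_nonneg: "\<And>j. 0 \<le> lam j" and "0 < d"
    and kernel: "\<forall>j k. lam j = 0 \<and> lam k = 0 \<longrightarrow> cinner (psi j) (D *v psi k) = 0"
  shows "((\<lambda>e. eigen_weighted_sum sld_weight D (\<lambda>j. (1 - e) * lam j + e / d) psi)
    \<longlongrightarrow> eigen_weighted_sum sld_weight D lam psi) (at_right 0)"
  unfolding eigen_weighted_sum_def
proof (intro tendsto_sum)
  fix j k
  show "((\<lambda>e. sld_weight ((1 - e) * lam j + e / d) ((1 - e) * lam k + e / d)
      * (cmod (cinner (psi j) (D *v psi k)))\<^sup>2)
    \<longlongrightarrow> sld_weight (lam j) (lam k) * (cmod (cinner (psi j) (D *v psi k)))\<^sup>2) (at_right 0)"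
  proof (cases "0 < lam j + lam k")
    case True
    then show ?thesis
      by (intro tendsto_mult_right tendsto_sld_weight_depolarized lam_nonneg \<open>0 < d\<close>)
  next
    case False
    then have "lam j = 0" "lam k = 0"
      using lam_nonneg[of j] lam_nonneg[of k] by linarith+
    then show ?thesis
      using kernel by simp
  qed
qed

lemma eigen_weighted_sum_depolarized_at_top:
  assumes "0 < d" and "lam j = 0" "lam k = 0" and "cinner (psi j) (D *v psi k) \<noteq> 0"
  shows "filterlim (\<lambda>e. 2 * ((1 - e)\<^sup>2 * eigen_weighted_sum sld_weight D (\<lambda>j. (1 - e) * lam j + e / d) psi))
    at_top (at_right 0)"
proof (rule filterlim_at_top_mono[OF _ always_eventually, rotated], intro allI)
  fix e :: real
  let ?t = "sld_weight (e / d) (e / d) * (cmod (cinner (psi j) (D *v psi k)))\<^sup>2"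
  let ?S = "eigen_weighted_sum sld_weight D (\<lambda>j. (1 - e) * lam j + e / d) psi"
  have "0 \<le> ?t"
    by (simp add: sld_weight_nonneg)
  moreover have "?t \<le> ?S"
    using eigen_weighted_sum_ge_term[where h=sld_weight and lam="\<lambda>i. (1 - e) * lam i + e / d"
        and j=j and k=k, OF sld_weight_nonneg] assms(2,3) by simp
  ultimately have "(1 - e)\<^sup>2 * ?t \<le> (1 - e)\<^sup>2 * ?S" and "0 \<le> (1 - e)\<^sup>2 * ?S"
    by (simp_all add: mult_left_mono)
  then show "(1 - e)\<^sup>2 * ?t \<le> 2 * ((1 - e)\<^sup>2 * ?S)"
    by linarith
next
  show "filterlim (\<lambda>e. (1 - e)\<^sup>2 * (sld_weight (e / d) (e / d) * (cmod (cinner (psi j) (D *v psi k)))\<^sup>2))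
      at_top (at_right 0)"
    using sld_weight_depolarized_at_top[OF \<open>0 < d\<close>] assms(4) by simp
qed

lemma tendsto_sld_fisher_depolarized:
  fixes A D :: "complex^'n^'n" and d :: real
  assumes herm: "hermitian_op A" and psd: "\<forall>v. 0 \<le> Re (cinner v (A *v v))" and "0 < d"
  shows "((\<lambda>e. sld_fisher ((1 - e) *\<^sub>R A + (e / d) *\<^sub>R mat 1) ((1 - e) *\<^sub>R D))
    \<longlongrightarrow> sld_fisher A D) (at_right 0)"
proof -
  obtain lam psi where sd: "is_spectral_decomp A lam psi"
    using hermitian_spectral_decomp[OF herm] by blast
  have lam_nonneg: "0 \<le> lam j" for j
    using spectral_decomp_nonneg[OF sd psd] .
  define F where "F e = ereal (2 * ((1 - e)\<^sup>2 *
    eigen_weighted_sum sld_weight D (\<lambda>j. (1 - e) * lam j + e / d) psi))" for e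
  have depolarized: "\<forall>\<^sub>F e in at_right 0. sld_fisher ((1 - e) *\<^sub>R A + (e / d) *\<^sub>R mat 1) ((1 - e) *\<^sub>R D) = F e"
    unfolding F_def
    by (rule eventually_mono[OF eventually_at_right_real[of 0 1]])
       (auto intro: sld_fisher_depolarized[OF sd lam_nonneg \<open>0 < d\<close>])
  have "(F \<longlongrightarrow> sld_fisher A D) (at_right 0)"
  proof (cases "\<forall>j k. lam j = 0 \<and> lam k = 0 \<longrightarrow> cinner (psi j) (D *v psi k) = 0")
    case True
    have "(F \<longlongrightarrow> ereal (2 * ((1 - 0)\<^sup>2 * eigen_weighted_sum sld_weight D lam psi))) (at_right 0)"
      unfolding F_def
      by (intro tendsto_intros tendsto_eigen_weighted_sum_depolarized[OF lam_nonneg \<open>0 < d\<close> True])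
    then show ?thesis
      unfolding sld_fisher_spectral[OF sd] if_P[OF True] by simp
  next
    case False
    then obtain j k where "lam j = 0" "lam k = 0" "cinner (psi j) (D *v psi k) \<noteq> 0"
      by blast
    then have "(F \<longlongrightarrow> \<infinity>) (at_right 0)"
      unfolding F_def tendsto_PInfty_eq_at_top by (rule eigen_weighted_sum_depolarized_at_top[OF \<open>0 < d\<close>])
    then show ?thesis
      unfolding sld_fisher_spectral[OF sd] if_not_P[OF False] .
  qed
  then show ?thesis
    using tendsto_cong[OF depolarized] by simp
qed

theorem mainTheorem1:
  fixes rho :: "real \<Rightarrow> complex^'n^'n" and \<Theta> :: "real set" and \<theta> :: real
  assumes "open \<Theta>" and "\<theta> \<in> \<Theta>"
    and "\<forall>t\<in>\<Theta>. density_op (rho t)"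
    and "\<forall>t\<in>\<Theta>. rho differentiable (at t)"
  shows "((\<lambda>\<epsilon>. fisher_info (\<lambda>t. (1 - \<epsilon>) *\<^sub>R rho t + (\<epsilon> / real CARD('n)) *\<^sub>R mat 1) \<theta>)
            \<longlongrightarrow> fisher_info rho \<theta>) (at_right 0)"
proof -
  define D where "D = vector_derivative rho (at \<theta>)"
  have "density_op (rho \<theta>)"
    using assms(2,3) by blast
  then have herm: "hermitian_op (rho \<theta>)" and psd: "\<forall>v. 0 \<le> Re (cinner v (rho \<theta> *v v))"
    unfolding density_op_def by blast+
  have "(rho has_vector_derivative D) (at \<theta>)"
    using assms(2,4) vector_derivative_works unfolding D_def by blast
  then have "vector_derivative (\<lambda>t. (1 - \<epsilon>) *\<^sub>R rho t + (\<epsilon> / real CARD('n)) *\<^sub>R mat 1) (at \<theta>)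
      = (1 - \<epsilon>) *\<^sub>R D" for \<epsilon>
    by (auto intro!: vector_derivative_at derivative_eq_intros)
  then show ?thesis
    unfolding fisher_info_def D_def[symmetric]
    using tendsto_sld_fisher_depolarized[OF herm psd, of "real CARD('n)"] by simp
qed

end
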